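(* Let $w$ be analytic on the open unit disk $D=\{|z|<1\}$ and suppose $w$ has a soft singularity at a point $z_1$ with $|z_1|=1$. Then the angular primitive $w^{-1\cdot}(z)=-i\int_0^z\frac{w(z')-w(0)}{z'}\,dz'$ also has a soft singularity at $z_1$; in particular $w^{-1\cdot}(z_1)=-i\int_0^{z_1}\frac{w(z)-w(0)}{z}\,dz$, taken along a simple curve in $D$ ending at $z_1$, exists and is finite.
   Context: An inner analytic function is one analytic on the open unit disk centered at the origin. Its angular primitive is $w^{-1\cdot}(z)=-i\int_0^z\frac{w(z')-w(0)}{z'}dz'$ (integral along any curve in the disk, integrand extended at $0$ by $w'(0)$). A singular point of $w$ on the unit circle is a point where $w$ fails to be analytic; a singularity at $z_1$ on the unit circle is soft if $\lim_{z\to z_1}w(z)$ (from within the open disk) exists and is finite, and hard otherwise. *)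

theory Defs
  imports "HOL-Complex_Analysis.Complex_Analysis"
begin

definition ang_integrand :: "(complex \<Rightarrow> complex) \<Rightarrow> complex \<Rightarrow> complex" where
  "ang_integrand w u = (if u = 0 then deriv w 0 else (w u - w 0) / u)"

text \<open>Angular primitive, integrating along the segment from 0 to z
  (path-independent in the unit disk).\<close>
definition angular_primitive :: "(complex \<Rightarrow> complex) \<Rightarrow> complex \<Rightarrow> complex" where
  "angular_primitive w z = - \<i> * contour_integral (linepath 0 z) (ang_integrand w)"

definition analytic_at_boundary :: "(complex \<Rightarrow> complex) \<Rightarrow> complex \<Rightarrow> bool" where
  "analytic_at_boundary w z1 \<longleftrightarrow>
     (\<exists>g r. r > 0 \<and> g holomorphic_on ball z1 r \<and> (\<forall>z \<in> ball z1 r \<inter> ball 0 1. g z = w z))"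

definition singular_point :: "(complex \<Rightarrow> complex) \<Rightarrow> complex \<Rightarrow> bool" where
  "singular_point w z1 \<longleftrightarrow> \<not> analytic_at_boundary w z1"

definition soft_singularity :: "(complex \<Rightarrow> complex) \<Rightarrow> complex \<Rightarrow> bool" where
  "soft_singularity w z1 \<longleftrightarrow>
     singular_point w z1 \<and> (\<exists>L. (w \<longlongrightarrow> L) (at z1 within ball 0 1))"

end

theory Submission
  imports Defs
begin

text \<open>Writing \<open>P = angular_primitive w\<close>, we have \<open>P' = -\<i> (w z - w 0) / z\<close> on the disk. Near
  \<open>z1\<close> the integrand is bounded, since \<open>w\<close> has a finite limit there and \<open>|z|\<close> stays away
  from \<open>0\<close>; so \<open>P\<close> is Lipschitz on a convex neighbourhood of \<open>z1\<close> in the disk and extends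
  continuously to \<open>z1\<close>. The fundamental theorem of calculus along any arc ending at \<open>z1\<close>
  then evaluates the integral as the boundary value. Finally \<open>P\<close> cannot be analytic
  at \<open>z1\<close>, because \<open>w = w 0 + \<i> z P'\<close> would then be analytic there as well.\<close>

lemma has_contour_integral_primitive_interior:
  fixes G f :: "complex \<Rightarrow> complex" and \<gamma> :: "real \<Rightarrow> complex"
  assumes G: "\<And>x. x \<in> D \<Longrightarrow> (G has_field_derivative f x) (at x)"
    and vp: "valid_path \<gamma>" and inD: "\<And>t. t \<in> {0<..<1} \<Longrightarrow> \<gamma> t \<in> D"
    and cont: "continuous_on (path_image \<gamma>) G"
  shows "(f has_contour_integral (G (pathfinish \<gamma>) - G (pathstart \<gamma>))) \<gamma>"
proof -
  obtain K where "finite K" and K: "\<forall>x\<in>{0..1} - K. \<gamma> differentiable (at x within {0..1})"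
    and cg: "continuous_on {0..1} \<gamma>"
    using piecewise_C1_imp_differentiable[OF vp[unfolded valid_path_def]]
    by (auto simp: piecewise_differentiable_on_def)
  have cfg: "continuous_on {0..1} (\<lambda>x. G (\<gamma> x))"
    using continuous_on_compose[OF cg, of G] cont by (simp add: path_image_def o_def)
  have der: "((\<lambda>x. G (\<gamma> x)) has_vector_derivative
              f (\<gamma> x) * vector_derivative \<gamma> (at x within {0..1})) (at x)"
    if x: "x \<in> {0<..<1} - K" for x
  proof -
    have ax: "at x within {0..1} = at x" using x at_within_Icc_at[of 0 x 1] by auto
    note ax[simp]
    have "x \<in> {0..1} - K" using x by auto
    then have "\<gamma> differentiable at x" using K by (metis ax)
    then have "(\<gamma> has_vector_derivative vector_derivative \<gamma> (at x)) (at x)"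
      by (simp add: vector_derivative_works)
    then have gdiff: "(\<gamma> has_derivative (\<lambda>u. u * vector_derivative \<gamma> (at x))) (at x)"
      by (simp add: has_vector_derivative_def scaleR_conv_of_real)
    have "(G has_derivative (*) (f (\<gamma> x))) (at (\<gamma> x))"
      using G inD x by (simp add: has_field_derivative_def)
    then have "((\<lambda>x. G (\<gamma> x)) has_derivative
                 (\<lambda>u. f (\<gamma> x) * (u * vector_derivative \<gamma> (at x)))) (at x)"
      using diff_chain_at[OF gdiff] by (simp add: o_def)
    then show ?thesis by (simp add: has_vector_derivative_def scaleR_conv_of_real mult_ac)
  qed
  have "((\<lambda>x. f (\<gamma> x) * vector_derivative \<gamma> (at x within {0..1}))
          has_integral (G (\<gamma> 1) - G (\<gamma> 0))) {0..1}"
    by (rule fundamental_theorem_of_calculus_interior_strong[OF \<open>finite K\<close>]) (use der cfg in auto)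
  then show ?thesis by (simp add: has_contour_integral_def pathfinish_def pathstart_def)
qed

lemma has_contour_integral_arc_to_boundary:
  fixes G f :: "complex \<Rightarrow> complex" and \<gamma> :: "real \<Rightarrow> complex"
  assumes "open D" and G: "\<And>x. x \<in> D \<Longrightarrow> (G has_field_derivative f x) (at x)"
    and lim: "(G \<longlongrightarrow> L) (at z1 within D)" and "z1 \<notin> D"
    and "valid_path \<gamma>" and "arc \<gamma>" and pf: "pathfinish \<gamma> = z1"
    and pim: "path_image \<gamma> - {z1} \<subseteq> D"
  shows "(f has_contour_integral (L - G (pathstart \<gamma>))) \<gamma>"
proof -
  define H where "H z = (if z \<in> D then G z else L)" for z
  have H: "(H has_field_derivative f x) (at x)" if "x \<in> D" for x
    by (rule has_field_derivative_transform_within_open[OF G[OF that] \<open>open D\<close> that])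
       (simp add: H_def)
  have inD: "\<gamma> t \<in> D" if t: "t \<in> {0<..<1}" for t
  proof -
    have "\<gamma> t \<noteq> \<gamma> 1" using \<open>arc \<gamma>\<close> t unfolding arc_def inj_on_def by force
    moreover have "\<gamma> t \<in> path_image \<gamma>" using t by (auto simp: path_image_def)
    ultimately show ?thesis using pf pim by (auto simp: pathfinish_def)
  qed
  have "continuous (at z within path_image \<gamma>) H" if z: "z \<in> path_image \<gamma>" for z
  proof (cases "z = z1")
    case True
    have "(H \<longlongrightarrow> L) (at z1 within D)"
      by (rule Lim_transform_eventually[OF lim]) (auto simp: eventually_at_filter H_def)
    then have "(H \<longlongrightarrow> L) (at z1 within (path_image \<gamma> - {z1}))"
      by (rule tendsto_within_subset) (use pim in simp)
    moreover have "at z1 within path_image \<gamma> = at z1 within (path_image \<gamma> - {z1})"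
      by (rule at_within_nhd[of z1 UNIV]) auto
    ultimately show ?thesis
      using True \<open>z1 \<notin> D\<close> by (simp add: continuous_within H_def)
  next
    case False
    then have "z \<in> D" using z pim by auto
    then show ?thesis
      using H DERIV_isCont continuous_at_imp_continuous_at_within by blast
  qed
  then have "continuous_on (path_image \<gamma>) H" by (simp add: continuous_on_eq_continuous_within)
  then have "(f has_contour_integral (H (pathfinish \<gamma>) - H (pathstart \<gamma>))) \<gamma>"
    using has_contour_integral_primitive_interior[OF H \<open>valid_path \<gamma>\<close> inD] by blast
  moreover have "pathstart \<gamma> \<in> D"
  proof -
    have "pathstart \<gamma> \<noteq> z1" using arc_distinct_ends[OF \<open>arc \<gamma>\<close>] pf by simp
    then show ?thesis using pim pathstart_in_path_image[of \<gamma>] by auto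
  qed
  ultimately show ?thesis using pf \<open>z1 \<notin> D\<close> by (simp add: H_def)
qed

lemma bounded_derivative_imp_tendsto_closure:
  fixes g f :: "complex \<Rightarrow> complex"
  assumes "convex S" and g: "\<And>x. x \<in> S \<Longrightarrow> (g has_field_derivative f x) (at x within S)"
    and B: "\<And>x. x \<in> S \<Longrightarrow> norm (f x) \<le> B" and "z \<in> closure S"
  shows "\<exists>l. (g \<longlongrightarrow> l) (at z within S)"
proof -
  have "S \<noteq> {}" using \<open>z \<in> closure S\<close> by auto
  then obtain x where "x \<in> S" by blast
  then have "B \<ge> 0" using B[of x] norm_ge_zero order_trans by blast
  moreover have "dist (g x) (g y) \<le> B * dist x y" if "x \<in> S" "y \<in> S" for x y
    using field_differentiable_bound[OF \<open>convex S\<close> g B that] by (simp add: dist_norm)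
  ultimately have "lipschitz_on B S g" by (intro lipschitz_onI)
  then have "uniformly_continuous_on S g" by (rule lipschitz_on_uniformly_continuous)
  then obtain l where "(g \<longlongrightarrow> l) (at z within S)"
    using uniformly_continuous_on_extension_at_closure \<open>z \<in> closure S\<close> by metis
  then show ?thesis ..
qed

lemma ang_integrand_holomorphic:
  assumes "w holomorphic_on S" and "open S"
  shows "ang_integrand w holomorphic_on S"
proof -
  have "(\<lambda>z. (w z - w 0) / z) holomorphic_on S - {0}"
    by (intro holomorphic_intros holomorphic_on_subset[OF assms(1)]) auto
  then have off0: "ang_integrand w holomorphic_on S - {0}"
    by (rule holomorphic_transform) (auto simp: ang_integrand_def)
  have lim0: "(ang_integrand w \<longlongrightarrow> ang_integrand w 0) (at 0 within S)" if "0 \<in> S"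
  proof -
    have "(w has_field_derivative deriv w 0) (at 0)"
      using assms that holomorphic_derivI by blast
    then have "((\<lambda>y. (w y - w 0) / (y - 0)) \<longlongrightarrow> deriv w 0) (at 0)"
      by (simp add: has_field_derivative_iff)
    then have "(ang_integrand w \<longlongrightarrow> deriv w 0) (at 0)"
      by (rule Lim_transform_eventually)
         (auto simp: ang_integrand_def eventually_at_filter)
    then show ?thesis
      using tendsto_mono[OF at_le[of S UNIV]] by (simp add: ang_integrand_def)
  qed
  show ?thesis
  proof (cases "0 \<in> S")
    case True
    then show ?thesis
      using no_isolated_singularity'[of "{0}" "ang_integrand w" S] lim0 off0 \<open>open S\<close> by auto
  qed (use off0 in simp)
qed

lemma angular_primitive_has_field_derivative:
  assumes "w holomorphic_on ball 0 1" and z: "z \<in> ball 0 1"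
  shows "(angular_primitive w has_field_derivative - \<i> * ang_integrand w z) (at z)"
proof -
  obtain g where g: "\<And>x. x \<in> ball 0 1 \<Longrightarrow>
      (g has_field_derivative ang_integrand w x) (at x within ball 0 1)"
    using holomorphic_convex_primitive'[OF convex_ball open_ball
        ang_integrand_holomorphic[OF assms(1) open_ball]] by blast
  have eq: "- \<i> * (g x - g 0) = angular_primitive w x" if x: "x \<in> ball 0 1" for x
  proof -
    have "closed_segment 0 x \<subseteq> ball 0 1" using x by (simp add: closed_segment_subset)
    then have "(ang_integrand w has_contour_integral (g x - g 0)) (linepath 0 x)"
      using contour_integral_primitive[OF g, of "linepath 0 x"] by simp
    then show ?thesis by (simp add: angular_primitive_def contour_integral_unique)
  qed
  have "(g has_field_derivative ang_integrand w z) (at z)"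
    using g[OF z] at_within_open[OF z open_ball] by simp
  then have "((\<lambda>x. - \<i> * (g x - g 0)) has_field_derivative - \<i> * ang_integrand w z) (at z)"
    by (auto intro!: derivative_eq_intros)
  then show ?thesis
    by (rule has_field_derivative_transform_within_open[OF _ open_ball z]) (rule eq)
qed

lemma angular_primitive_zero [simp]: "angular_primitive w 0 = 0"
  by (simp add: angular_primitive_def)

lemma ang_integrand_bounded_near_boundary:
  assumes "norm z1 = 1" and lim: "(w \<longlongrightarrow> Lw) (at z1 within ball 0 1)"
  obtains \<delta> B where "\<delta> > 0"
    and "\<And>z. z \<in> ball z1 \<delta> \<inter> ball 0 1 \<Longrightarrow> norm (ang_integrand w z) \<le> B"
proof -
  have "\<forall>\<^sub>F z in at z1 within ball 0 1. dist (w z) Lw < 1" using tendstoD[OF lim] by simp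
  then obtain d where "d > 0"
    and d: "\<And>x. x \<in> ball 0 1 \<Longrightarrow> 0 < dist x z1 \<Longrightarrow> dist x z1 < d \<Longrightarrow> dist (w x) Lw < 1"
    by (auto simp: eventually_at)
  define \<delta> where "\<delta> = min d (1/2)"
  define B where "B = 2 * (norm Lw + 1 + norm (w 0))"
  have "norm (ang_integrand w z) \<le> B" if z: "z \<in> ball z1 \<delta> \<inter> ball 0 1" for z
  proof -
    have "z \<noteq> z1" using z assms(1) by auto
    moreover have "dist z z1 < d" using z by (simp add: \<delta>_def dist_commute)
    ultimately have "dist (w z) Lw < 1" using d z by simp
    then have "norm (w z) \<le> norm Lw + 1"
      using norm_triangle_sub[of "w z" Lw] by (simp add: dist_norm)
    then have num: "norm (w z - w 0) \<le> norm Lw + 1 + norm (w 0)"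
      using norm_triangle_ineq4[of "w z" "w 0"] by linarith
    have "norm (z1 - z) < 1/2" using z by (simp add: \<delta>_def dist_norm)
    then have den: "norm z \<ge> 1/2"
      using assms(1) norm_triangle_sub[of z1 z] by linarith
    have "norm (ang_integrand w z) = norm (w z - w 0) / norm z"
      using den by (auto simp: ang_integrand_def norm_divide)
    also have "\<dots> \<le> (norm Lw + 1 + norm (w 0)) / (1/2)"
      using num den by (intro frac_le) auto
    finally show ?thesis by (simp add: B_def)
  qed
  moreover have "\<delta> > 0" using \<open>d > 0\<close> by (simp add: \<delta>_def)
  ultimately show ?thesis using that by blast
qed

lemma angular_primitive_tendsto_boundary:
  assumes "w holomorphic_on ball 0 1" and "norm z1 = 1"
    and "(w \<longlongrightarrow> Lw) (at z1 within ball 0 1)"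
  shows "\<exists>L. (angular_primitive w \<longlongrightarrow> L) (at z1 within ball 0 1)"
proof -
  obtain \<delta> B where "\<delta> > 0"
    and B: "\<And>z. z \<in> ball z1 \<delta> \<inter> ball 0 1 \<Longrightarrow> norm (ang_integrand w z) \<le> B"
    using ang_integrand_bounded_near_boundary[OF assms(2,3)] by blast
  define S where "S = ball z1 \<delta> \<inter> ball 0 1"
  have "convex S" by (simp add: S_def convex_Int)
  moreover have "(angular_primitive w has_field_derivative - \<i> * ang_integrand w x) (at x within S)"
    if "x \<in> S" for x
    using angular_primitive_has_field_derivative[OF assms(1)] that
    by (auto simp: S_def intro: has_field_derivative_at_within)
  moreover have "norm (- \<i> * ang_integrand w x) \<le> B" if "x \<in> S" for x
    using B that by (simp add: S_def norm_mult)
  moreover have "z1 \<in> closure S"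
    using open_Int_closure_subset[of "ball z1 \<delta>" "ball 0 1"] \<open>\<delta> > 0\<close> assms(2)
    by (auto simp: S_def)
  ultimately have "\<exists>L. (angular_primitive w \<longlongrightarrow> L) (at z1 within S)"
    by (rule bounded_derivative_imp_tendsto_closure)
  moreover have "at z1 within S = at z1 within ball 0 1"
    by (rule at_within_nhd[of z1 "ball z1 \<delta>"]) (use \<open>\<delta> > 0\<close> in \<open>auto simp: S_def\<close>)
  ultimately show ?thesis by auto
qed

lemma analytic_at_boundary_of_angular_primitive:
  assumes "w holomorphic_on ball 0 1" and "analytic_at_boundary (angular_primitive w) z1"
  shows "analytic_at_boundary w z1"
proof -
  obtain h r where "r > 0" and h: "h holomorphic_on ball z1 r"
    and hP: "\<forall>z \<in> ball z1 r \<inter> ball 0 1. h z = angular_primitive w z"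
    using assms(2) by (auto simp: analytic_at_boundary_def)
  have "w 0 + \<i> * z * deriv h z = w z" if z: "z \<in> ball z1 r \<inter> ball 0 1" for z
  proof -
    have "(h has_field_derivative - \<i> * ang_integrand w z) (at z)"
    proof (rule has_field_derivative_transform_within_open[where S = "ball z1 r \<inter> ball 0 1"])
      show "(angular_primitive w has_field_derivative - \<i> * ang_integrand w z) (at z)"
        using angular_primitive_has_field_derivative[OF assms(1)] z by blast
    qed (use z hP in auto)
    moreover have "(h has_field_derivative deriv h z) (at z)"
      using h z by (intro holomorphic_derivI[of h "ball z1 r"]) auto
    ultimately have dh: "deriv h z = - \<i> * ang_integrand w z" by (rule DERIV_unique[rotated])
    show ?thesis
    proof (cases "z = 0")
      case False
      then have "z * deriv h z = - \<i> * (w z - w 0)" by (simp add: dh ang_integrand_def)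
      then have "\<i> * (z * deriv h z) = w z - w 0" by (simp add: mult.assoc[symmetric])
      then show ?thesis by (simp add: algebra_simps)
    qed simp
  qed
  moreover have "(\<lambda>z. w 0 + \<i> * z * deriv h z) holomorphic_on ball z1 r"
    by (intro holomorphic_intros holomorphic_deriv h) auto
  ultimately show ?thesis
    using \<open>r > 0\<close> unfolding analytic_at_boundary_def by blast
qed

theorem mainTheorem8:
  fixes w :: "complex \<Rightarrow> complex" and z1 :: complex
  assumes "w holomorphic_on ball 0 1"
    and "norm z1 = 1"
    and "soft_singularity w z1"
  shows "soft_singularity (angular_primitive w) z1 \<and>
    (\<exists>L. (angular_primitive w \<longlongrightarrow> L) (at z1 within ball 0 1) \<and>
       (\<forall>\<gamma>. valid_path \<gamma> \<and> arc \<gamma> \<and> pathstart \<gamma> = 0 \<and> pathfinish \<gamma> = z1 \<and>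
             path_image \<gamma> - {z1} \<subseteq> ball 0 1
          \<longrightarrow> (ang_integrand w has_contour_integral (\<i> * L)) \<gamma>))"
proof -
  obtain Lw where "(w \<longlongrightarrow> Lw) (at z1 within ball 0 1)"
    and sing: "\<not> analytic_at_boundary w z1"
    using assms(3) by (auto simp: soft_singularity_def singular_point_def)
  then obtain L where L: "(angular_primitive w \<longlongrightarrow> L) (at z1 within ball 0 1)"
    using angular_primitive_tendsto_boundary assms(1,2) by blast
  have "(ang_integrand w has_contour_integral (\<i> * L)) \<gamma>"
    if "valid_path \<gamma>" "arc \<gamma>" "pathstart \<gamma> = 0" "pathfinish \<gamma> = z1"
       "path_image \<gamma> - {z1} \<subseteq> ball 0 1" for \<gamma>
  proof -
    have "((\<lambda>z. - \<i> * ang_integrand w z) has_contour_integral L) \<gamma>"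
      using has_contour_integral_arc_to_boundary[OF open_ball
          angular_primitive_has_field_derivative[OF assms(1)] L _ that(1,2,4,5)] that(3) assms(2)
      by simp
    then have "((\<lambda>z. \<i> * (- \<i> * ang_integrand w z)) has_contour_integral \<i> * L) \<gamma>"
      by (rule has_contour_integral_lmul)
    then show ?thesis by simp
  qed
  moreover have "\<not> analytic_at_boundary (angular_primitive w) z1"
    using analytic_at_boundary_of_angular_primitive[OF assms(1)] sing by blast
  ultimately show ?thesis
    using L by (auto simp: soft_singularity_def singular_point_def)
qed

end
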